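(* Let $\mathbb M$ be an $(n,n-1)$-free sequential Morse matching on an orthogonally based finite-type chain complex $(\mathbf C,I)$ of real inner product spaces, with maps $\Phi^{\mathbb M}:\mathbf C^{\mathbb M}\to\mathbf C$, $\Psi^{\mathbb M}:\mathbf C\to\mathbf C^{\mathbb M}$ and critical cells $\mathbb M^0$. Then (1) $\Phi_n^{\mathbb M}\Psi_n^{\mathbb M}(s)\in\bigoplus_{\alpha\in\mathbb M^0\cap I_n}C_\alpha$ for all $s\in\mathbf C_n$, and (2) $\Psi^{\mathbb M\dagger}_{n-1}\Phi^{\mathbb M\dagger}_{n-1}(s)\in\bigoplus_{\beta\in\mathbb M^0\cap I_{n-1}}C_\beta$ for all $s\in\mathbf C_{n-1}$.
   Context: Based chain complex: chain complex $(\mathbf C,\partial)$ of finite-dimensional real inner product spaces $\mathbf C_n$, $n\ge0$, with disjoint finite index sets $I_n$ and $\mathbf C_n=\bigoplus_{\alpha\in I_n}C_\alpha$; orthogonally based means $C_\alpha\perp C_{\alpha'}$ for $\alpha\ne\alpha'$. $\partial_{\beta,\alpha}=\pi_\beta\partial_n i_\alpha$. Graph: edges $\alpha\to\beta$ when $\partial_{\beta,\alpha}\ne0$. Morse matching: edge set $M$ with each cell on at most one edge, $\partial_{\beta,\alpha}$ an isomorphism for $\alpha\to\beta\in M$, and "directed path from $\alpha$ to $\beta$ in the graph with $M$ reversed" a partial order on each $I_n$; $M^0$ = unmatched cells. With $\Gamma_{\beta,\alpha}$ the sum over directed paths from $\alpha$ to $\beta$ in the reversed graph of composites of $\partial_{\sigma_{i+1},\sigma_i}$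 (ordinary steps) and $-\partial_{\sigma_i,\sigma_{i+1}}^{-1}$ (reversed matched edges): $\mathbf C^M_n=\bigoplus_{\alpha\in I_n\cap M^0}C_\alpha$ with boundary $\sum_{\beta\in M^0\cap I_{n-1}}\Gamma_{\beta,\alpha}$ and restricted inner product, $\Phi^M=\sum_{\beta\in I_n}\Gamma_{\beta,\alpha}$ on critical $C_\alpha$, $\Psi^M=\sum_{\beta\in M^0\cap I_n}\Gamma_{\beta,\alpha}$ on $C_\alpha$. A sequential Morse matching $\mathbb M=(M_{(1)},\dots,M_{(k)})$: $M_{(1)}$ a Morse matching on $(\mathbf C,I)$, $M_{(j+1)}$ a Morse matching on the based complex $\mathbf C^{M_{(j)}}$; $\mathbf C^{\mathbb M}=\mathbf C^{M_{(k)}}$, $\mathbb M^0=M_{(k)}^0$, $\Phi^{\mathbb M}=\Phi^{M_{(1)}}\circ\cdots\circ\Phi^{M_{(k)}}$, $\Psi^{\mathbb M}=\Psi^{M_{(k)}}\circ\cdots\circ\Psi^{M_{(1)}}$. $\mathbb M$ is $(n,n-1)$-free if no $M_{(j)}$ pairs an $n$-cell with an $(n-1)$-cell. $\dagger$ denotes adjoint. *)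

theory Defs
  imports "HOL-Analysis.Analysis"
begin

text \<open>A based chain complex is represented inside one ambient finite-dimensional real
inner product space 'v: a finite set of cells, a degree function, for each cell alpha
a subspace C_alpha of 'v, and a boundary map.\<close>

record ('c, 'v) bcx =
  cells :: "'c set"
  deg   :: "'c \<Rightarrow> nat"
  sp    :: "'c \<Rightarrow> 'v set"
  bd    :: "'v \<Rightarrow> 'v"

definition chain_grp :: "('c, 'v::real_vector) bcx \<Rightarrow> nat \<Rightarrow> 'v set" where
  "chain_grp X n = span (\<Union>a\<in>{a\<in>cells X. deg X a = n}. sp X a)"

definition oproj :: "'v::real_inner set \<Rightarrow> 'v \<Rightarrow> 'v" where
  "oproj S v = (THE p. p \<in> S \<and> (\<forall>s\<in>S. inner (v - p) s = 0))"

definition ortho_based :: "('c, 'v::euclidean_space) bcx \<Rightarrow> bool" where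
  "ortho_based X \<longleftrightarrow>
     finite (cells X) \<and>
     (\<forall>a\<in>cells X. subspace (sp X a)) \<and>
     (\<forall>a\<in>cells X. \<forall>a'\<in>cells X. a \<noteq> a' \<longrightarrow>
         (\<forall>x\<in>sp X a. \<forall>y\<in>sp X a'. inner x y = 0)) \<and>
     linear (bd X) \<and>
     (\<forall>a\<in>cells X. \<forall>x\<in>sp X a.
         (if deg X a = 0 then bd X x = 0 else bd X x \<in> chain_grp X (deg X a - 1))) \<and>
     (\<forall>a\<in>cells X. \<forall>x\<in>sp X a. bd X (bd X x) = 0)"

definition dpart :: "('c, 'v::real_inner) bcx \<Rightarrow> 'c \<Rightarrow> 'c \<Rightarrow> 'v \<Rightarrow> 'v" where
  "dpart X b a v = oproj (sp X b) (bd X (oproj (sp X a) v))"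

definition dinv :: "('c, 'v::real_inner) bcx \<Rightarrow> 'c \<Rightarrow> 'c \<Rightarrow> 'v \<Rightarrow> 'v" where
  "dinv X b a v = inv_into (sp X a) (dpart X b a) (oproj (sp X b) v)"

definition edge :: "('c, 'v::real_inner) bcx \<Rightarrow> 'c \<Rightarrow> 'c \<Rightarrow> bool" where
  "edge X a b \<longleftrightarrow> a \<in> cells X \<and> b \<in> cells X \<and> deg X b + 1 = deg X a \<and>
      (\<exists>x\<in>sp X a. dpart X b a x \<noteq> 0)"

definition rstep :: "('c, 'v::real_inner) bcx \<Rightarrow> ('c \<times> 'c) set \<Rightarrow> 'c \<Rightarrow> 'c \<Rightarrow> bool" where
  "rstep X M x y \<longleftrightarrow> (edge X x y \<and> (x, y) \<notin> M) \<or> (y, x) \<in> M"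

definition reach :: "('c, 'v::real_inner) bcx \<Rightarrow> ('c \<times> 'c) set \<Rightarrow> 'c rel" where
  "reach X M = {(x, y). rstep X M x y}\<^sup>*"

definition morse_matching :: "('c, 'v::real_inner) bcx \<Rightarrow> ('c \<times> 'c) set \<Rightarrow> bool" where
  "morse_matching X M \<longleftrightarrow>
     (\<forall>(a, b)\<in>M. edge X a b) \<and>
     (\<forall>e\<in>M. \<forall>e'\<in>M. e \<noteq> e' \<longrightarrow> {fst e, snd e} \<inter> {fst e', snd e'} = {}) \<and>
     (\<forall>(a, b)\<in>M. bij_betw (dpart X b a) (sp X a) (sp X b)) \<and>
     (\<forall>n. partial_order_on {a \<in> cells X. deg X a = n}
             {(a, b). deg X a = n \<and> deg X b = n \<and> a \<in> cells X \<and> b \<in> cells X \<and>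
                      (a, b) \<in> reach X M})"

definition crit :: "('c, 'v) bcx \<Rightarrow> ('c \<times> 'c) set \<Rightarrow> 'c set" where
  "crit X M = {a \<in> cells X. \<forall>e\<in>M. a \<noteq> fst e \<and> a \<noteq> snd e}"

definition stepmap :: "('c, 'v::real_inner) bcx \<Rightarrow> ('c \<times> 'c) set \<Rightarrow> 'c \<Rightarrow> 'c \<Rightarrow> 'v \<Rightarrow> 'v" where
  "stepmap X M x y = (if (y, x) \<in> M then (\<lambda>v. - dinv X x y v) else dpart X y x)"

fun pcomp :: "('c, 'v::real_inner) bcx \<Rightarrow> ('c \<times> 'c) set \<Rightarrow> 'c list \<Rightarrow> 'v \<Rightarrow> 'v" where
  "pcomp X M [] = id"
| "pcomp X M [x] = id"
| "pcomp X M (x # y # p) = pcomp X M (y # p) \<circ> stepmap X M x y"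

fun valid_path :: "('c, 'v::real_inner) bcx \<Rightarrow> ('c \<times> 'c) set \<Rightarrow> 'c list \<Rightarrow> bool" where
  "valid_path X M [] = False"
| "valid_path X M [x] = (x \<in> cells X)"
| "valid_path X M (x # y # p) = (x \<in> cells X \<and> rstep X M x y \<and> valid_path X M (y # p))"

text \<open>Directed paths from a to b in the reversed graph (the graph is acyclic for a Morse
matching, so all such paths are simple).\<close>
definition paths :: "('c, 'v::real_inner) bcx \<Rightarrow> ('c \<times> 'c) set \<Rightarrow> 'c \<Rightarrow> 'c \<Rightarrow> 'c list set" where
  "paths X M a b = {p. valid_path X M p \<and> distinct p \<and> hd p = a \<and> last p = b}"

definition Gam :: "('c, 'v::real_inner) bcx \<Rightarrow> ('c \<times> 'c) set \<Rightarrow> 'c \<Rightarrow> 'c \<Rightarrow> 'v \<Rightarrow> 'v" where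
  "Gam X M b a v = (\<Sum>p\<in>paths X M a b. pcomp X M p (oproj (sp X a) v))"

definition reduce :: "('c, 'v::real_inner) bcx \<Rightarrow> ('c \<times> 'c) set \<Rightarrow> ('c, 'v) bcx" where
  "reduce X M = \<lparr> cells = crit X M, deg = deg X, sp = sp X,
      bd = (\<lambda>v. \<Sum>a\<in>crit X M. \<Sum>b\<in>{b\<in>crit X M. deg X b + 1 = deg X a}. Gam X M b a v) \<rparr>"

definition PhiM :: "('c, 'v::real_inner) bcx \<Rightarrow> ('c \<times> 'c) set \<Rightarrow> 'v \<Rightarrow> 'v" where
  "PhiM X M v = (\<Sum>a\<in>crit X M. \<Sum>b\<in>{b\<in>cells X. deg X b = deg X a}. Gam X M b a v)"

definition PsiM :: "('c, 'v::real_inner) bcx \<Rightarrow> ('c \<times> 'c) set \<Rightarrow> 'v \<Rightarrow> 'v" where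
  "PsiM X M v = (\<Sum>a\<in>cells X. \<Sum>b\<in>{b\<in>crit X M. deg X b = deg X a}. Gam X M b a v)"

fun seq_morse :: "('c, 'v::real_inner) bcx \<Rightarrow> ('c \<times> 'c) set list \<Rightarrow> bool" where
  "seq_morse X [] = True"
| "seq_morse X (M # Ms) = (morse_matching X M \<and> seq_morse (reduce X M) Ms)"

fun reduce_seq :: "('c, 'v::real_inner) bcx \<Rightarrow> ('c \<times> 'c) set list \<Rightarrow> ('c, 'v) bcx" where
  "reduce_seq X [] = X"
| "reduce_seq X (M # Ms) = reduce_seq (reduce X M) Ms"

fun Phi_seq :: "('c, 'v::real_inner) bcx \<Rightarrow> ('c \<times> 'c) set list \<Rightarrow> 'v \<Rightarrow> 'v" where
  "Phi_seq X [] = id"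
| "Phi_seq X (M # Ms) = PhiM X M \<circ> Phi_seq (reduce X M) Ms"

fun Psi_seq :: "('c, 'v::real_inner) bcx \<Rightarrow> ('c \<times> 'c) set list \<Rightarrow> 'v \<Rightarrow> 'v" where
  "Psi_seq X [] = id"
| "Psi_seq X (M # Ms) = Psi_seq (reduce X M) Ms \<circ> PsiM X M"

definition seq_free :: "('c, 'v) bcx \<Rightarrow> ('c \<times> 'c) set list \<Rightarrow> nat \<Rightarrow> bool" where
  "seq_free X Ms n \<longleftrightarrow>
     (\<forall>M\<in>set Ms. \<forall>(a, b)\<in>M. \<not> (deg X a = n \<and> deg X b + 1 = n))"

definition radj :: "'v::real_inner set \<Rightarrow> ('v \<Rightarrow> 'v) \<Rightarrow> 'v \<Rightarrow> 'v" where
  "radj U f w = (THE u. u \<in> U \<and> (\<forall>x\<in>U. inner (f x) w = inner x u))"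

end

theory Submission
  imports Defs
begin

text \<open>If no matching pairs an \<open>n\<close>-cell with an \<open>(n-1)\<close>-cell, a path of the reversed graph
  that starts below degree \<open>n\<close> stays below degree \<open>n\<close>: only reversed matched edges raise
  the degree, and none of them leads from degree \<open>n-1\<close> to \<open>n\<close>. Hence a path between
  \<open>n\<close>-cells starting at a critical cell is trivial (its first step goes down and it never
  comes back), and so is a path between \<open>(n-1)\<close>-cells ending at a critical cell (its last
  step would have to leave an \<open>n\<close>-cell).
  So at every stage \<open>\<Phi>\<close> is the identity on critical \<open>n\<close>-chains, and \<open>\<Psi>\<close> is, on
  \<open>(n-1)\<close>-chains, the orthogonal projection onto the critical \<open>(n-1)\<close>-cells. Part (1) follows
  because \<open>\<Psi>\<close> lands in critical chains. For part (2), the composite \<open>\<Psi>\<close> on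
  \<open>(n-1)\<close>-chains is the orthogonal projection onto the finally critical cells; being
  self-adjoint, its adjoint lands in critical chains whatever the adjoint of \<open>\<Phi>\<close> produced.\<close>

section \<open>Orthogonal projections\<close>

lemma oproj_unique:
  fixes S :: "'v::real_inner set"
  assumes "subspace S" "p \<in> S" "\<And>s. s \<in> S \<Longrightarrow> inner (v - p) s = 0"
  shows "oproj S v = p"
  unfolding oproj_def
proof (rule the_equality)
  show "p \<in> S \<and> (\<forall>s\<in>S. inner (v - p) s = 0)" using assms by blast
next
  fix q assume q: "q \<in> S \<and> (\<forall>s\<in>S. inner (v - q) s = 0)"
  have "p - q \<in> S" using assms(1,2) q by (simp add: subspace_diff)
  moreover have "inner (p - q) (p - q) = inner (v - q) (p - q) - inner (v - p) (p - q)"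
    by (simp add: algebra_simps inner_diff_left)
  ultimately have "inner (p - q) (p - q) = 0" using q assms(3) by simp
  then show "q = p" by simp
qed

lemma oproj_in_orth:
  fixes S :: "'v::euclidean_space set"
  assumes "subspace S"
  shows "oproj S v \<in> S \<and> (\<forall>s\<in>S. inner (v - oproj S v) s = 0)"
proof -
  obtain y z where "y \<in> span S" and z: "\<And>w. w \<in> span S \<Longrightarrow> orthogonal z w" and "v = y + z"
    using orthogonal_subspace_decomp_exists by blast
  have y: "y \<in> S" using \<open>y \<in> span S\<close> assms by (metis span_eq_iff)
  have "\<forall>s\<in>S. inner (v - y) s = 0"
    using z \<open>v = y + z\<close> span_superset by (force simp: orthogonal_def)
  then show ?thesis using oproj_unique[OF assms y] y by auto
qed

lemma oproj_in:
  fixes S :: "'v::euclidean_space set"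
  shows "subspace S \<Longrightarrow> oproj S v \<in> S"
  using oproj_in_orth by blast

lemma oproj_orth:
  fixes S :: "'v::euclidean_space set"
  shows "subspace S \<Longrightarrow> s \<in> S \<Longrightarrow> inner (v - oproj S v) s = 0"
  using oproj_in_orth by blast

lemma oproj_eq_0:
  fixes S :: "'v::real_inner set"
  assumes "subspace S" "\<And>s. s \<in> S \<Longrightarrow> inner v s = 0"
  shows "oproj S v = 0"
  using assms by (intro oproj_unique) (auto simp: subspace_0)

lemma oproj_0:
  fixes S :: "'v::real_inner set"
  shows "subspace S \<Longrightarrow> oproj S 0 = 0"
  by (rule oproj_eq_0) auto

lemma oproj_cong_orth:
  fixes S :: "'v::euclidean_space set"
  assumes "subspace S" "\<And>s. s \<in> S \<Longrightarrow> inner (x - y) s = 0"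
  shows "oproj S x = oproj S y"
proof (rule oproj_unique[OF assms(1) oproj_in[OF assms(1)]])
  fix s assume "s \<in> S"
  then show "inner (x - oproj S y) s = 0"
    using assms(2)[of s] oproj_orth[OF assms(1), of s y] by (simp add: inner_diff_left)
qed

lemma oproj_self_adjoint:
  fixes S :: "'v::euclidean_space set"
  assumes "subspace S"
  shows "inner (oproj S x) y = inner x (oproj S y)"
proof -
  have "inner (oproj S x) y = inner (oproj S x) (oproj S y) + inner (y - oproj S y) (oproj S x)"
    by (simp add: inner_diff_left inner_diff_right inner_commute)
  also have "\<dots> = inner x (oproj S y) - inner (x - oproj S x) (oproj S y)"
    using oproj_orth[OF assms oproj_in[OF assms]] by (simp add: inner_diff_left)
  also have "\<dots> = inner x (oproj S y)"
    using oproj_orth[OF assms oproj_in[OF assms]] by simp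
  finally show ?thesis .
qed

lemma radj_eqI:
  fixes U :: "'v::real_inner set"
  assumes "subspace U" "u \<in> U" "\<And>x. x \<in> U \<Longrightarrow> inner (f x) w = inner x u"
  shows "radj U f w = u"
  unfolding radj_def
proof (rule the_equality)
  show "u \<in> U \<and> (\<forall>x\<in>U. inner (f x) w = inner x u)" using assms(2,3) by blast
next
  fix u' assume u': "u' \<in> U \<and> (\<forall>x\<in>U. inner (f x) w = inner x u')"
  then have "u' - u \<in> U" using assms(1,2) by (simp add: subspace_diff)
  then have "inner (u' - u) u' = inner (u' - u) u" using u' assms(3) by simp
  then have "inner (u' - u) (u' - u) = 0" by (simp add: inner_diff_right)
  then show "u' = u" by simp
qed

section \<open>Orthogonal families of subspaces\<close>

definition orth_family :: "'c set \<Rightarrow> ('c \<Rightarrow> 'v::real_inner set) \<Rightarrow> bool" where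
  "orth_family A S \<longleftrightarrow> (\<forall>a\<in>A. subspace (S a)) \<and>
     (\<forall>a\<in>A. \<forall>a'\<in>A. a \<noteq> a' \<longrightarrow> (\<forall>x\<in>S a. \<forall>y\<in>S a'. inner x y = 0))"

lemma orth_family_subspace: "orth_family A S \<Longrightarrow> a \<in> A \<Longrightarrow> subspace (S a)"
  unfolding orth_family_def by blast

lemma orth_familyD:
  "orth_family A S \<Longrightarrow> a \<in> A \<Longrightarrow> b \<in> A \<Longrightarrow> a \<noteq> b \<Longrightarrow> x \<in> S a \<Longrightarrow> y \<in> S b \<Longrightarrow> inner x y = 0"
  unfolding orth_family_def by blast

lemma orth_family_subset: "orth_family A S \<Longrightarrow> B \<subseteq> A \<Longrightarrow> orth_family B S"
  unfolding orth_family_def by (meson subsetD)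

lemma oproj_span_orth_family_eq_0:
  fixes S :: "'c \<Rightarrow> 'v::euclidean_space set"
  assumes "orth_family A S" "a \<in> A" "B \<subseteq> A" "a \<notin> B" "w \<in> span (\<Union>b\<in>B. S b)"
  shows "oproj (S a) w = 0"
proof (rule oproj_eq_0)
  show "subspace (S a)" by (rule orth_family_subspace[OF assms(1,2)])
next
  fix s assume s: "s \<in> S a"
  have "orthogonal s w"
  proof (rule orthogonal_to_span[OF assms(5)])
    fix x assume "x \<in> (\<Union>b\<in>B. S b)"
    then obtain b where "b \<in> B" "x \<in> S b" by blast
    moreover have "b \<in> A" "a \<noteq> b" using \<open>b \<in> B\<close> assms(3,4) by auto
    ultimately show "orthogonal s x"
      using orth_familyD[OF assms(1,2)] s unfolding orthogonal_def by blast
  qed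
  then show "inner w s = 0" by (simp add: orthogonal_def inner_commute)
qed

lemma inner_sum_oproj_orth_family:
  fixes S :: "'c \<Rightarrow> 'v::euclidean_space set"
  assumes "finite A" "orth_family A S" "b \<in> A" "s \<in> S b"
  shows "inner (\<Sum>a\<in>A. oproj (S a) v) s = inner v s"
proof -
  note sub = orth_family_subspace[OF assms(2)]
  have "inner (oproj (S a) v) s = 0" if "a \<in> A - {b}" for a
    using orth_familyD[OF assms(2) _ assms(3) _ oproj_in[OF sub] assms(4)] that by blast
  then have "(\<Sum>a\<in>A - {b}. inner (oproj (S a) v) s) = 0" by (simp add: sum.neutral)
  then have "(\<Sum>a\<in>A. inner (oproj (S a) v) s) = inner (oproj (S b) v) s"
    using sum.remove[OF assms(1,3), of "\<lambda>a. inner (oproj (S a) v) s"] by simp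
  also have "\<dots> = inner v s"
    using oproj_orth[OF sub[OF assms(3)] assms(4)] by (simp add: inner_diff_left)
  finally show ?thesis by (simp add: inner_sum_left)
qed

lemma oproj_sum_oproj:
  fixes S :: "'c \<Rightarrow> 'v::euclidean_space set"
  assumes "finite A" "orth_family A S" "b \<in> A"
  shows "oproj (S b) (\<Sum>a\<in>A. oproj (S a) v) = oproj (S b) v"
  using assms inner_sum_oproj_orth_family[OF assms]
  by (intro oproj_cong_orth) (auto simp: orth_family_def inner_diff_left)

lemma sum_oproj_span:
  fixes S :: "'c \<Rightarrow> 'v::euclidean_space set"
  assumes "finite A" "orth_family A S" "v \<in> span (\<Union>a\<in>A. S a)"
  shows "(\<Sum>a\<in>A. oproj (S a) v) = v"
proof -
  let ?d = "v - (\<Sum>a\<in>A. oproj (S a) v)"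
  have "oproj (S a) v \<in> (\<Union>a\<in>A. S a)" if "a \<in> A" for a
    using that assms(2) oproj_in unfolding orth_family_def by blast
  then have "(\<Sum>a\<in>A. oproj (S a) v) \<in> span (\<Union>a\<in>A. S a)"
    by (meson span_base span_sum)
  then have "?d \<in> span (\<Union>a\<in>A. S a)" using assms(3) by (simp add: span_diff)
  moreover have "orthogonal ?d x" if "x \<in> (\<Union>a\<in>A. S a)" for x
    using that inner_sum_oproj_orth_family[OF assms(1,2)] by (auto simp: orthogonal_def inner_diff_left)
  ultimately have "orthogonal ?d ?d" by (rule orthogonal_to_span)
  then show ?thesis by (simp add: orthogonal_def)
qed

lemma sum_oproj_self_adjoint:
  fixes S :: "'c \<Rightarrow> 'v::euclidean_space set"
  assumes "\<And>a. a \<in> A \<Longrightarrow> subspace (S a)"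
  shows "inner (\<Sum>a\<in>A. oproj (S a) x) y = inner x (\<Sum>a\<in>A. oproj (S a) y)"
  unfolding inner_sum_left inner_sum_right using oproj_self_adjoint[OF assms] by (rule sum.cong[OF refl])

section \<open>Chain groups and their orthogonal projections\<close>

definition weakly_based :: "('c, 'v::real_inner) bcx \<Rightarrow> bool" where
  "weakly_based X \<longleftrightarrow> finite (cells X) \<and> orth_family (cells X) (sp X) \<and> bd X 0 = 0"

lemma ortho_based_imp_weakly_based: "ortho_based X \<Longrightarrow> weakly_based X"
  by (simp add: ortho_based_def weakly_based_def orth_family_def linear_0)

lemma weakly_based_subspace: "weakly_based X \<Longrightarrow> a \<in> cells X \<Longrightarrow> subspace (sp X a)"
  unfolding weakly_based_def by (blast intro: orth_family_subspace)

lemma weakly_based_cells_of_deg: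
  assumes "weakly_based X"
  shows "finite {a\<in>cells X. deg X a = d}" "orth_family {a\<in>cells X. deg X a = d} (sp X)"
  using assms by (auto simp: weakly_based_def intro: orth_family_subset)

lemma subspace_chain_grp: "subspace (chain_grp X d)"
  by (simp add: chain_grp_def)

definition chain_proj :: "('c, 'v::real_inner) bcx \<Rightarrow> nat \<Rightarrow> 'v \<Rightarrow> 'v" where
  "chain_proj X d v = (\<Sum>a\<in>{a\<in>cells X. deg X a = d}. oproj (sp X a) v)"

lemma chain_proj_in:
  fixes X :: "('c, 'v::euclidean_space) bcx"
  assumes "weakly_based X"
  shows "chain_proj X d v \<in> chain_grp X d"
proof -
  have "oproj (sp X a) v \<in> (\<Union>a\<in>{a\<in>cells X. deg X a = d}. sp X a)"
    if "a \<in> {a\<in>cells X. deg X a = d}" for a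
    using that oproj_in[OF weakly_based_subspace[OF assms]] by blast
  then show ?thesis unfolding chain_proj_def chain_grp_def by (meson span_base span_sum)
qed

lemma chain_proj_id:
  fixes X :: "('c, 'v::euclidean_space) bcx"
  assumes "weakly_based X" "v \<in> chain_grp X d"
  shows "chain_proj X d v = v"
  unfolding chain_proj_def
proof (rule sum_oproj_span[OF weakly_based_cells_of_deg[OF assms(1)]])
  show "v \<in> span (\<Union>a\<in>{a\<in>cells X. deg X a = d}. sp X a)"
    using assms(2) by (simp add: chain_grp_def)
qed

lemma chain_proj_self_adjoint:
  fixes X :: "('c, 'v::euclidean_space) bcx"
  shows "weakly_based X \<Longrightarrow> inner (chain_proj X d x) y = inner x (chain_proj X d y)"
  unfolding chain_proj_def by (rule sum_oproj_self_adjoint) (simp add: weakly_based_subspace)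

lemma oproj_chain_grp_other_deg:
  fixes X :: "('c, 'v::euclidean_space) bcx"
  assumes "weakly_based X" "v \<in> chain_grp X d" "a \<in> cells X" "deg X a \<noteq> d"
  shows "oproj (sp X a) v = 0"
proof (rule oproj_span_orth_family_eq_0[where B = "{b\<in>cells X. deg X b = d}"])
  show "orth_family (cells X) (sp X)" using assms(1) by (simp add: weakly_based_def)
  show "v \<in> span (\<Union>b\<in>{b\<in>cells X. deg X b = d}. sp X b)"
    using assms(2) by (simp add: chain_grp_def)
qed (use assms(3,4) in auto)

definition sub_basis :: "('c, 'v) bcx \<Rightarrow> ('c, 'v) bcx \<Rightarrow> bool" where
  "sub_basis Y X \<longleftrightarrow> cells Y \<subseteq> cells X \<and> deg Y = deg X \<and> sp Y = sp X"

lemma sub_basis_refl: "sub_basis X X"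
  by (simp add: sub_basis_def)

lemma sub_basis_trans: "sub_basis Z Y \<Longrightarrow> sub_basis Y X \<Longrightarrow> sub_basis Z X"
  by (auto simp: sub_basis_def)

lemma chain_grp_mono: "sub_basis Y X \<Longrightarrow> chain_grp Y d \<subseteq> chain_grp X d"
  unfolding sub_basis_def chain_grp_def by (auto intro!: span_mono)

lemma chain_proj_chain_proj:
  fixes X :: "('c, 'v::euclidean_space) bcx"
  assumes "weakly_based X" "sub_basis Y X"
  shows "chain_proj Y d (chain_proj X d v) = chain_proj Y d v"
  unfolding chain_proj_def[of Y]
proof (rule sum.cong[OF refl])
  fix a assume "a \<in> {a\<in>cells Y. deg Y a = d}"
  then have "a \<in> {a\<in>cells X. deg X a = d}" and "sp Y = sp X"
    using assms(2) by (auto simp: sub_basis_def)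
  then show "oproj (sp Y a) (chain_proj X d v) = oproj (sp Y a) v"
    unfolding chain_proj_def by (simp add: oproj_sum_oproj weakly_based_cells_of_deg[OF assms(1)])
qed

section \<open>Path composites of a Morse matching\<close>

lemma morse_matching_edge: "morse_matching X M \<Longrightarrow> (a, b) \<in> M \<Longrightarrow> edge X a b"
  unfolding morse_matching_def by blast

lemma morse_matching_bij:
  "morse_matching X M \<Longrightarrow> (a, b) \<in> M \<Longrightarrow> bij_betw (dpart X b a) (sp X a) (sp X b)"
  unfolding morse_matching_def by blast

lemma rstep_cells:
  assumes "morse_matching X M" "rstep X M x y"
  shows "x \<in> cells X" "y \<in> cells X"
  using assms morse_matching_edge[OF assms(1)] by (auto simp: rstep_def edge_def)

lemma crit_subset_cells: "crit X M \<subseteq> cells X"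
  unfolding crit_def by auto

lemma valid_path_cells: "valid_path X M p \<Longrightarrow> set p \<subseteq> cells X"
  by (induction X M p rule: valid_path.induct) (auto simp: rstep_def edge_def)

lemma dpart_0:
  fixes X :: "('c, 'v::real_inner) bcx"
  assumes "weakly_based X" "a \<in> cells X" "b \<in> cells X"
  shows "dpart X b a 0 = 0"
  using assms by (simp add: dpart_def oproj_0 weakly_based_subspace weakly_based_def)

lemma dinv_0:
  fixes X :: "('c, 'v::real_inner) bcx"
  assumes "weakly_based X" "morse_matching X M" "(a, b) \<in> M"
  shows "dinv X b a 0 = 0"
proof -
  have cells: "a \<in> cells X" "b \<in> cells X"
    using morse_matching_edge[OF assms(2,3)] by (auto simp: edge_def)
  have "inj_on (dpart X b a) (sp X a)"
    using morse_matching_bij[OF assms(2,3)] by (rule bij_betw_imp_inj_on)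
  moreover have "0 \<in> sp X a" using weakly_based_subspace[OF assms(1) cells(1)] by (rule subspace_0)
  ultimately have "inv_into (sp X a) (dpart X b a) 0 = 0"
    using inv_into_f_f dpart_0[OF assms(1) cells] by metis
  then show ?thesis using oproj_0[OF weakly_based_subspace[OF assms(1) cells(2)]] by (simp add: dinv_def)
qed

lemma stepmap_0:
  fixes X :: "('c, 'v::real_inner) bcx"
  assumes "weakly_based X" "morse_matching X M" "rstep X M x y"
  shows "stepmap X M x y 0 = 0"
  using dinv_0[OF assms(1,2)] dpart_0[OF assms(1) rstep_cells[OF assms(2,3)]]
  by (simp add: stepmap_def)

lemma stepmap_in:
  fixes X :: "('c, 'v::euclidean_space) bcx"
  assumes "weakly_based X" "morse_matching X M" "rstep X M x y"
  shows "stepmap X M x y v \<in> sp X y"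
proof -
  have sub: "subspace (sp X x)" "subspace (sp X y)"
    using rstep_cells[OF assms(2,3)] by (simp_all add: weakly_based_subspace[OF assms(1)])
  show ?thesis
  proof (cases "(y, x) \<in> M")
    case True
    have "oproj (sp X x) v \<in> dpart X x y ` sp X y"
      using oproj_in[OF sub(1)] morse_matching_bij[OF assms(2) True] by (simp add: bij_betw_def)
    then have "dinv X x y v \<in> sp X y" unfolding dinv_def by (rule inv_into_into)
    then show ?thesis using True sub(2) by (simp add: stepmap_def subspace_neg)
  next
    case False
    then show ?thesis using oproj_in[OF sub(2)] by (simp add: stepmap_def dpart_def)
  qed
qed

lemma pcomp_0:
  fixes X :: "('c, 'v::real_inner) bcx"
  assumes "weakly_based X" "morse_matching X M"
  shows "valid_path X M p \<Longrightarrow> pcomp X M p 0 = 0"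
  by (induction p rule: induct_list012) (simp_all add: stepmap_0[OF assms])

lemma pcomp_in:
  fixes X :: "('c, 'v::euclidean_space) bcx"
  assumes "weakly_based X" "morse_matching X M"
  shows "valid_path X M p \<Longrightarrow> v \<in> sp X (hd p) \<Longrightarrow> pcomp X M p v \<in> sp X (last p)"
  by (induction p arbitrary: v rule: induct_list012) (simp_all add: stepmap_in[OF assms])

lemma Gam_eq_0:
  fixes X :: "('c, 'v::real_inner) bcx"
  assumes "weakly_based X" "morse_matching X M" "oproj (sp X a) v = 0"
  shows "Gam X M b a v = 0"
  using pcomp_0[OF assms(1,2)] by (simp add: Gam_def assms(3) paths_def)

lemma Gam_in:
  fixes X :: "('c, 'v::euclidean_space) bcx"
  assumes "weakly_based X" "morse_matching X M" "b \<in> cells X"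
  shows "Gam X M b a v \<in> sp X b"
  unfolding Gam_def
proof (rule subspace_sum[OF weakly_based_subspace[OF assms(1,3)]])
  fix p assume "p \<in> paths X M a b"
  then have p: "valid_path X M p" "hd p = a" "last p = b" by (auto simp: paths_def)
  then have "a \<in> cells X" using valid_path_cells hd_in_set by (metis valid_path.simps(1) subsetD)
  then have "oproj (sp X a) v \<in> sp X (hd p)" using p(2) oproj_in weakly_based_subspace[OF assms(1)] by blast
  then show "pcomp X M p (oproj (sp X a) v) \<in> sp X b" using pcomp_in[OF assms(1,2) p(1)] p(3) by simp
qed

lemma weakly_based_reduce:
  fixes X :: "('c, 'v::euclidean_space) bcx"
  assumes "weakly_based X" "morse_matching X M"
  shows "weakly_based (reduce X M)"
proof -
  have "finite (crit X M)" "orth_family (crit X M) (sp X)"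
    using assms(1) crit_subset_cells unfolding weakly_based_def by (meson finite_subset orth_family_subset)+
  moreover have "Gam X M b a 0 = 0" if "a \<in> crit X M" for a b
  proof (rule Gam_eq_0[OF assms])
    show "oproj (sp X a) 0 = 0"
      using that crit_subset_cells weakly_based_subspace[OF assms(1)] oproj_0 by (meson subsetD)
  qed
  ultimately show ?thesis by (simp add: weakly_based_def reduce_def)
qed

lemma sub_basis_reduce: "sub_basis (reduce X M) X"
  by (simp add: sub_basis_def reduce_def crit_subset_cells)

lemma valid_path_last_step:
  "valid_path X M p \<Longrightarrow> length p \<ge> 2 \<Longrightarrow> \<exists>x\<in>set p. rstep X M x (last p)"
proof (induction p rule: induct_list012)
  case (3 x y p)
  show ?case
  proof (cases p)
    case Nil
    then show ?thesis using "3.prems" by simp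
  next
    case (Cons z q)
    then have "\<exists>w\<in>set (y # p). rstep X M w (last (y # p))" using 3 by simp
    then show ?thesis by auto
  qed
qed auto

lemma Gam_trivial_paths:
  assumes "a \<in> cells X" "\<And>p. p \<in> paths X M a b \<Longrightarrow> p = [a]"
  shows "Gam X M b a v = (if b = a then oproj (sp X a) v else 0)"
proof -
  have "p \<in> paths X M a b \<longleftrightarrow> b = a \<and> p = [a]" for p
  proof
    assume p: "p \<in> paths X M a b"
    then have "p = [a]" by (rule assms(2))
    with p show "b = a \<and> p = [a]" by (simp add: paths_def)
  next
    assume "b = a \<and> p = [a]"
    then show "p \<in> paths X M a b" using assms(1) by (simp add: paths_def)
  qed
  then have "paths X M a b = (if b = a then {[a]} else {})" by auto
  then show ?thesis by (simp add: Gam_def)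
qed

lemma Gam_other_deg:
  fixes X :: "('c, 'v::euclidean_space) bcx"
  assumes "weakly_based X" "morse_matching X M" "v \<in> chain_grp X d" "a \<in> cells X" "deg X a \<noteq> d"
  shows "Gam X M b a v = 0"
  by (rule Gam_eq_0[OF assms(1,2) oproj_chain_grp_other_deg[OF assms(1,3-5)]])

lemma PsiM_in:
  fixes X :: "('c, 'v::euclidean_space) bcx"
  assumes "weakly_based X" "morse_matching X M" "v \<in> chain_grp X d"
  shows "PsiM X M v \<in> chain_grp (reduce X M) d"
proof -
  have "Gam X M b a v \<in> chain_grp (reduce X M) d"
    if a: "a \<in> cells X" and b: "b \<in> crit X M" "deg X b = deg X a" for a b
  proof (cases "deg X a = d")
    case True
    have "Gam X M b a v \<in> sp X b"
      using Gam_in[OF assms(1,2)] b(1) crit_subset_cells[of X M] by blast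
    then have "Gam X M b a v \<in> (\<Union>c\<in>{c\<in>crit X M. deg X c = d}. sp X c)"
      using b True by blast
    then show ?thesis by (simp add: chain_grp_def reduce_def span_base)
  next
    case False
    then show ?thesis using Gam_other_deg[OF assms a] subspace_0[OF subspace_chain_grp] by simp
  qed
  then show ?thesis unfolding PsiM_def by (auto intro!: subspace_sum[OF subspace_chain_grp])
qed

section \<open>Consequences of freeness\<close>

lemma rstep_deg_lt:
  assumes "morse_matching X M" "seq_free X [M] n" "rstep X M x y" "deg X x < n"
  shows "deg X y < n"
proof (cases "(y, x) \<in> M")
  case True
  then have "deg X x + 1 = deg X y"
    using morse_matching_edge[OF assms(1)] by (simp add: edge_def)
  moreover have "\<not> (deg X y = n \<and> deg X x + 1 = n)"
    using True assms(2) by (auto simp: seq_free_def)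
  ultimately show ?thesis using assms(4) by simp
next
  case False
  then show ?thesis using assms(3,4) by (auto simp: rstep_def edge_def)
qed

lemma valid_path_deg_lt:
  assumes "morse_matching X M" "seq_free X [M] n"
  shows "valid_path X M p \<Longrightarrow> deg X (hd p) < n \<Longrightarrow> x \<in> set p \<Longrightarrow> deg X x < n"
proof (induction p rule: induct_list012)
  case (3 y z p)
  then have "deg X z < n" by (auto intro: rstep_deg_lt[OF assms])
  then show ?case using 3 by auto
qed auto

lemma paths_from_crit:
  assumes "morse_matching X M" "seq_free X [M] (deg X a)" "a \<in> crit X M"
    and "deg X b = deg X a" "p \<in> paths X M a b"
  shows "p = [a]"
proof (rule ccontr)
  assume "p \<noteq> [a]"
  have p: "valid_path X M p" "hd p = a" "last p = b" using assms(5) by (auto simp: paths_def)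
  then obtain y q where yq: "p = a # y # q" using \<open>p \<noteq> [a]\<close> by (cases p; cases "tl p") auto
  then have "rstep X M a y" using p(1) by simp
  moreover have "(y, a) \<notin> M" using assms(3) by (force simp: crit_def)
  ultimately have "deg X y < deg X a" by (auto simp: rstep_def edge_def)
  moreover have "b \<in> set (y # q)" using p(3) yq by (metis last.simps last_in_set list.distinct(1))
  ultimately have "deg X b < deg X a"
    using valid_path_deg_lt[OF assms(1,2), of "y # q"] p(1) yq by simp
  then show False using assms(4) by simp
qed

lemma paths_to_crit:
  assumes "morse_matching X M" "seq_free X [M] (Suc (deg X b))" "b \<in> crit X M"
    and "deg X a = deg X b" "p \<in> paths X M a b"
  shows "p = [a]"
proof (rule ccontr)
  assume "p \<noteq> [a]"
  have p: "valid_path X M p" "hd p = a" "last p = b" using assms(5) by (auto simp: paths_def)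
  then have "length p \<ge> 2" using \<open>p \<noteq> [a]\<close> by (cases p; cases "tl p") auto
  then obtain x where x: "x \<in> set p" "rstep X M x b" using valid_path_last_step p by metis
  have "(b, x) \<notin> M" using assms(3) by (force simp: crit_def)
  then have "deg X x = Suc (deg X b)" using x(2) by (auto simp: rstep_def edge_def)
  moreover have "deg X x < Suc (deg X b)"
    using valid_path_deg_lt[OF assms(1,2) p(1)] p(2) assms(4) x(1) by simp
  ultimately show False by simp
qed

lemma Gam_from_crit:
  assumes "morse_matching X M" "seq_free X [M] (deg X a)" "a \<in> crit X M" "deg X b = deg X a"
  shows "Gam X M b a v = (if b = a then oproj (sp X a) v else 0)"
proof (rule Gam_trivial_paths)
  show "a \<in> cells X" using assms(3) crit_subset_cells[of X M] by blast
qed (rule paths_from_crit[OF assms])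

lemma Gam_to_crit:
  assumes "morse_matching X M" "seq_free X [M] (Suc (deg X b))" "b \<in> crit X M" "deg X a = deg X b"
    and "a \<in> cells X"
  shows "Gam X M b a v = (if b = a then oproj (sp X a) v else 0)"
  by (rule Gam_trivial_paths[OF assms(5) paths_to_crit[OF assms(1-4)]])

lemma PhiM_id:
  fixes X :: "('c, 'v::euclidean_space) bcx"
  assumes "weakly_based X" "morse_matching X M" "seq_free X [M] n"
    and "w \<in> chain_grp (reduce X M) n"
  shows "PhiM X M w = w"
proof -
  have wX: "w \<in> chain_grp X n" using assms(4) chain_grp_mono[OF sub_basis_reduce] by blast
  have fin: "finite (crit X M)" "finite (cells X)"
    using assms(1) crit_subset_cells[of X M] by (auto simp: weakly_based_def intro: finite_subset)
  have "(\<Sum>b\<in>{b\<in>cells X. deg X b = deg X a}. Gam X M b a w)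
      = (if deg X a = n then oproj (sp X a) w else 0)" if a: "a \<in> crit X M" for a
  proof (cases "deg X a = n")
    case True
    have "(\<Sum>b\<in>{b\<in>cells X. deg X b = deg X a}. Gam X M b a w)
        = (\<Sum>b\<in>{b\<in>cells X. deg X b = deg X a}. if b = a then oproj (sp X a) w else 0)"
      using Gam_from_crit[OF assms(2) _ a] assms(3) True by simp
    also have "\<dots> = oproj (sp X a) w"
      using a crit_subset_cells[of X M] fin(2) by (auto simp: sum.delta')
    finally show ?thesis using True by simp
  next
    case False
    then show ?thesis using Gam_other_deg[OF assms(1,2) wX] a crit_subset_cells[of X M] by auto
  qed
  then have "PhiM X M w = (\<Sum>a\<in>crit X M. if deg X a = n then oproj (sp X a) w else 0)"
    unfolding PhiM_def by (rule sum.cong[OF refl])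
  also have "\<dots> = chain_proj (reduce X M) n w"
    using fin(1) by (simp add: chain_proj_def reduce_def sum.inter_filter)
  also have "\<dots> = w" by (rule chain_proj_id[OF weakly_based_reduce[OF assms(1,2)] assms(4)])
  finally show ?thesis .
qed

lemma PsiM_eq_chain_proj:
  fixes X :: "('c, 'v::euclidean_space) bcx"
  assumes "weakly_based X" "morse_matching X M" "seq_free X [M] (Suc d)"
    and "v \<in> chain_grp X d"
  shows "PsiM X M v = chain_proj (reduce X M) d v"
proof -
  have fin: "finite (crit X M)" "finite (cells X)"
    using assms(1) crit_subset_cells[of X M] by (auto simp: weakly_based_def intro: finite_subset)
  have "(\<Sum>b\<in>{b\<in>crit X M. deg X b = deg X a}. Gam X M b a v)
      = (if a \<in> crit X M \<and> deg X a = d then oproj (sp X a) v else 0)" if a: "a \<in> cells X" for a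
  proof (cases "deg X a = d")
    case True
    have "(\<Sum>b\<in>{b\<in>crit X M. deg X b = deg X a}. Gam X M b a v)
        = (\<Sum>b\<in>{b\<in>crit X M. deg X b = deg X a}. if b = a then oproj (sp X a) v else 0)"
      using Gam_to_crit[OF assms(2) _ _ _ a] assms(3) True by simp
    also have "\<dots> = (if a \<in> crit X M \<and> deg X a = d then oproj (sp X a) v else 0)"
      using fin(1) True by (simp add: sum.delta')
    finally show ?thesis .
  next
    case False
    then show ?thesis using Gam_other_deg[OF assms(1,2,4) a] by simp
  qed
  then have "PsiM X M v = (\<Sum>a\<in>cells X. if a \<in> crit X M \<and> deg X a = d then oproj (sp X a) v else 0)"
    unfolding PsiM_def by (rule sum.cong[OF refl])
  also have "\<dots> = (\<Sum>a\<in>{a\<in>cells X. a \<in> crit X M \<and> deg X a = d}. oproj (sp X a) v)"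
    using fin(2) by (simp add: sum.inter_filter)
  also have "{a\<in>cells X. a \<in> crit X M \<and> deg X a = d} = {a\<in>crit X M. deg X a = d}"
    using crit_subset_cells[of X M] by blast
  finally show ?thesis by (simp add: chain_proj_def reduce_def)
qed

section \<open>Sequential Morse matchings\<close>

lemma seq_free_ConsD:
  assumes "seq_free X (M # Ms) n"
  shows "seq_free X [M] n" "seq_free (reduce X M) Ms n"
  using assms by (auto simp: seq_free_def reduce_def)

lemma sub_basis_reduce_seq: "sub_basis (reduce_seq X Ms) X"
proof (induction Ms arbitrary: X)
  case Nil
  show ?case by (simp add: sub_basis_refl)
next
  case (Cons M Ms)
  show ?case using sub_basis_trans[OF Cons.IH sub_basis_reduce] by simp
qed

lemma seq_morse_Cons_reduce:
  fixes X :: "('c, 'v::euclidean_space) bcx"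
  assumes "weakly_based X" "seq_morse X (M # Ms)"
  shows "morse_matching X M" "weakly_based (reduce X M)" "seq_morse (reduce X M) Ms"
  using assms(2) weakly_based_reduce[OF assms(1)] by simp_all

lemma weakly_based_reduce_seq:
  fixes X :: "('c, 'v::euclidean_space) bcx"
  shows "weakly_based X \<Longrightarrow> seq_morse X Ms \<Longrightarrow> weakly_based (reduce_seq X Ms)"
  by (induction Ms arbitrary: X) (auto dest: seq_morse_Cons_reduce)

lemma Psi_seq_in:
  fixes X :: "('c, 'v::euclidean_space) bcx"
  shows "weakly_based X \<Longrightarrow> seq_morse X Ms \<Longrightarrow> v \<in> chain_grp X d
    \<Longrightarrow> Psi_seq X Ms v \<in> chain_grp (reduce_seq X Ms) d"
  by (induction Ms arbitrary: X v) (simp_all add: PsiM_in weakly_based_reduce)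

lemma Phi_seq_id:
  fixes X :: "('c, 'v::euclidean_space) bcx"
  shows "weakly_based X \<Longrightarrow> seq_morse X Ms \<Longrightarrow> seq_free X Ms n
    \<Longrightarrow> w \<in> chain_grp (reduce_seq X Ms) n \<Longrightarrow> Phi_seq X Ms w = w"
proof (induction Ms arbitrary: X)
  case (Cons M Ms)
  note M = seq_morse_Cons_reduce[OF Cons.prems(1,2)]
  note free = seq_free_ConsD[OF Cons.prems(3)]
  have "w \<in> chain_grp (reduce X M) n"
    using Cons.prems(4) chain_grp_mono[OF sub_basis_reduce_seq] by auto
  moreover have "Phi_seq (reduce X M) Ms w = w"
    using Cons.IH[OF M(2,3) free(2)] Cons.prems(4) by simp
  ultimately show ?case using PhiM_id[OF Cons.prems(1) M(1) free(1)] by simp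
qed simp

lemma Psi_seq_eq_chain_proj:
  fixes X :: "('c, 'v::euclidean_space) bcx"
  shows "weakly_based X \<Longrightarrow> seq_morse X Ms \<Longrightarrow> seq_free X Ms (Suc d)
    \<Longrightarrow> v \<in> chain_grp X d \<Longrightarrow> Psi_seq X Ms v = chain_proj (reduce_seq X Ms) d v"
proof (induction Ms arbitrary: X v)
  case Nil
  then show ?case by (simp add: chain_proj_id)
next
  case (Cons M Ms)
  let ?Y = "reduce X M"
  note M = seq_morse_Cons_reduce[OF Cons.prems(1,2)]
  note free = seq_free_ConsD[OF Cons.prems(3)]
  have "Psi_seq X (M # Ms) v = Psi_seq ?Y Ms (chain_proj ?Y d v)"
    using PsiM_eq_chain_proj[OF Cons.prems(1) M(1) free(1) Cons.prems(4)] by simp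
  also have "\<dots> = chain_proj (reduce_seq ?Y Ms) d (chain_proj ?Y d v)"
    by (rule Cons.IH[OF M(2,3) free(2) chain_proj_in[OF M(2)]])
  also have "\<dots> = chain_proj (reduce_seq ?Y Ms) d v"
    by (rule chain_proj_chain_proj[OF M(2) sub_basis_reduce_seq])
  finally show ?case by simp
qed

theorem mainTheorem12:
  fixes X :: "('c, 'v::euclidean_space) bcx"
    and Ms :: "('c \<times> 'c) set list"
    and n :: nat
  assumes "ortho_based X"
    and "seq_morse X Ms"
    and "seq_free X Ms n"
  shows "(\<forall>s\<in>chain_grp X n.
            Phi_seq X Ms (Psi_seq X Ms s) \<in> chain_grp (reduce_seq X Ms) n)
       \<and> (n \<ge> 1 \<longrightarrow> (\<forall>s\<in>chain_grp X (n - 1).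
            radj (chain_grp X (n - 1)) (Psi_seq X Ms)
                 (radj (chain_grp (reduce_seq X Ms) (n - 1)) (Phi_seq X Ms) s)
              \<in> chain_grp (reduce_seq X Ms) (n - 1)))"
proof -
  let ?F = "reduce_seq X Ms"
  have X: "weakly_based X" using assms(1) by (rule ortho_based_imp_weakly_based)
  have F: "weakly_based ?F" using weakly_based_reduce_seq[OF X assms(2)] .
  have Phi_Psi: "Phi_seq X Ms (Psi_seq X Ms s) \<in> chain_grp ?F n" if "s \<in> chain_grp X n" for s
    using Psi_seq_in[OF X assms(2) that] Phi_seq_id[OF X assms(2,3)] by simp
  have Psi_adj: "radj (chain_grp X d) (Psi_seq X Ms) w \<in> chain_grp ?F d" if "n = Suc d" for d w
  proof -
    have "radj (chain_grp X d) (Psi_seq X Ms) w = chain_proj ?F d w"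
    proof (rule radj_eqI[OF subspace_chain_grp])
      show "chain_proj ?F d w \<in> chain_grp X d"
        using chain_proj_in[OF F] chain_grp_mono[OF sub_basis_reduce_seq] by blast
      show "inner (Psi_seq X Ms x) w = inner x (chain_proj ?F d w)" if "x \<in> chain_grp X d" for x
        using Psi_seq_eq_chain_proj[OF X assms(2) _ that] assms(3) \<open>n = Suc d\<close>
          chain_proj_self_adjoint[OF F] by simp
    qed
    then show ?thesis using chain_proj_in[OF F] by simp
  qed
  show ?thesis using Phi_Psi Psi_adj[of "n - 1"] by simp
qed

end
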